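(* Let $G$ be a group, $N$ a normal subgroup of $G$, $\phi:G\to G/N$ the canonical projection, and $L,R$ nonempty subsets of $G$. Then $2\mathrm{S}(G;L,R)$ is weakly connected if and only if $2\mathrm{S}(G/N;\phi(L),\phi(R))$ is weakly connected and any two elements of $N$ are weakly connected to each other in $2\mathrm{S}(G;L,R)$.
   Context: For nonempty subsets $L,R$ of a group $G$, the two-sided group digraph $2\mathrm{S}(G;L,R)$ has vertex set $G$ and a directed arc $(g,h)$ if and only if $h=l^{-1}gr$ for some $l\in L$, $r\in R$. Vertex $g$ is weakly connected to $h$ if there is a sequence $g=g_0,\dots,g_n=h$ with, for each $i$, $(g_{i-1},g_i)$ or $(g_i,g_{i-1})$ an arc (intermediate vertices arbitrary in $G$); a digraph is weakly connected if every pair of vertices is weakly connected. *)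

theory Defs
  imports "HOL-Algebra.Algebra"
begin

definition two_sided_arc :: "('a, 'b) monoid_scheme \<Rightarrow> 'a set \<Rightarrow> 'a set \<Rightarrow> 'a \<Rightarrow> 'a \<Rightarrow> bool" where
  "two_sided_arc G L R g h \<longleftrightarrow> g \<in> carrier G \<and> h \<in> carrier G \<and>
     (\<exists>l\<in>L. \<exists>r\<in>R. h = inv\<^bsub>G\<^esub> l \<otimes>\<^bsub>G\<^esub> g \<otimes>\<^bsub>G\<^esub> r)"

definition weakly_connected_to :: "('a, 'b) monoid_scheme \<Rightarrow> 'a set \<Rightarrow> 'a set \<Rightarrow> 'a \<Rightarrow> 'a \<Rightarrow> bool" where
  "weakly_connected_to G L R g h \<longleftrightarrow>
     (\<lambda>x y. two_sided_arc G L R x y \<or> two_sided_arc G L R y x)\<^sup>*\<^sup>* g h"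

definition weakly_connected_2S :: "('a, 'b) monoid_scheme \<Rightarrow> 'a set \<Rightarrow> 'a set \<Rightarrow> bool" where
  "weakly_connected_2S G L R \<longleftrightarrow>
     (\<forall>g\<in>carrier G. \<forall>h\<in>carrier G. weakly_connected_to G L R g h)"

end

theory Submission
  imports Defs
begin

text \<open>Arcs of \<open>2S(G;L,R)\<close> are preserved by group homomorphisms, so weak connectivity
  passes to every quotient. Conversely, an arc \<open>(\<phi> x, Z)\<close> of the quotient digraph with
  \<open>Z = \<phi>(l)\<inverse> \<phi>(x) \<phi>(r)\<close> lifts to the arc \<open>(x, l\<inverse> x r)\<close>, and similarly for reversed arcs;
  hence every weak path in the quotient lifts to a weak path starting at any preimage of its
  start. Joining an arbitrary \<open>g\<close> to the identity coset therefore connects \<open>g\<close> to some element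
  of the kernel \<open>N\<close>, and if all elements of \<open>N\<close> are mutually connected, so are all of \<open>G\<close>.\<close>

lemma weakly_connected_to_eq_symclp:
  "weakly_connected_to G L R = (symclp (two_sided_arc G L R))\<^sup>*\<^sup>*"
  by (simp add: weakly_connected_to_def[abs_def] symclp_def[abs_def])

lemma weakly_connected_to_refl: "weakly_connected_to G L R x x"
  by (simp add: weakly_connected_to_eq_symclp)

lemma weakly_connected_to_sym:
  "weakly_connected_to G L R x y \<Longrightarrow> weakly_connected_to G L R y x"
  unfolding weakly_connected_to_eq_symclp by (rule sympD[OF symp_rtranclp_symclp])

lemma weakly_connected_to_trans:
  "weakly_connected_to G L R x y \<Longrightarrow> weakly_connected_to G L R y z \<Longrightarrow>
     weakly_connected_to G L R x z"
  unfolding weakly_connected_to_eq_symclp by (rule rtranclp_trans)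

lemma weakly_connected_to_if_symclp_arc:
  "symclp (two_sided_arc G L R) x y \<Longrightarrow> weakly_connected_to G L R x y"
  unfolding weakly_connected_to_eq_symclp by (rule r_into_rtranclp)

context group_hom
begin

lemma two_sided_arc_image:
  assumes "L \<subseteq> carrier G" "R \<subseteq> carrier G" "two_sided_arc G L R x y"
  shows "two_sided_arc H (h ` L) (h ` R) (h x) (h y)"
proof -
  from assms(3) obtain l r where "l \<in> L" "r \<in> R" "x \<in> carrier G"
    and "y = inv\<^bsub>G\<^esub> l \<otimes>\<^bsub>G\<^esub> x \<otimes>\<^bsub>G\<^esub> r"
    unfolding two_sided_arc_def by blast
  moreover have "l \<in> carrier G" "r \<in> carrier G"
    using assms(1,2) \<open>l \<in> L\<close> \<open>r \<in> R\<close> by auto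
  ultimately show ?thesis
    unfolding two_sided_arc_def by auto
qed

lemma weakly_connected_to_image:
  assumes "L \<subseteq> carrier G" "R \<subseteq> carrier G" "weakly_connected_to G L R x y"
  shows "weakly_connected_to H (h ` L) (h ` R) (h x) (h y)"
  using assms(3) unfolding weakly_connected_to_eq_symclp
proof (induction rule: rtranclp_induct)
  case (step y z)
  from step.hyps(2) have "symclp (two_sided_arc H (h ` L) (h ` R)) (h y) (h z)"
    using two_sided_arc_image[OF assms(1,2)] by (auto simp: symclp_def)
  with step.IH show ?case
    by (rule rtranclp.rtrancl_into_rtrancl)
qed simp

lemma two_sided_arc_lift:
  assumes "L \<subseteq> carrier G" "R \<subseteq> carrier G" "x \<in> carrier G"
    and "two_sided_arc H (h ` L) (h ` R) (h x) Z"
  shows "\<exists>y. h y = Z \<and> two_sided_arc G L R x y"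
proof -
  from assms(4) obtain l r where "l \<in> L" "r \<in> R"
    and "Z = inv\<^bsub>H\<^esub> h l \<otimes>\<^bsub>H\<^esub> h x \<otimes>\<^bsub>H\<^esub> h r"
    unfolding two_sided_arc_def by blast
  moreover have "l \<in> carrier G" "r \<in> carrier G"
    using assms(1,2) calculation by auto
  ultimately show ?thesis
    using assms(3) unfolding two_sided_arc_def
    by (intro exI[of _ "inv\<^bsub>G\<^esub> l \<otimes>\<^bsub>G\<^esub> x \<otimes>\<^bsub>G\<^esub> r"]) auto
qed

lemma two_sided_arc_lift_converse:
  assumes "L \<subseteq> carrier G" "R \<subseteq> carrier G" "x \<in> carrier G"
    and "two_sided_arc H (h ` L) (h ` R) Z (h x)"
  shows "\<exists>y. h y = Z \<and> two_sided_arc G L R y x"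
proof -
  from assms(4) obtain l r where "l \<in> L" "r \<in> R" and Z: "Z \<in> carrier H"
    and hx: "h x = inv\<^bsub>H\<^esub> h l \<otimes>\<^bsub>H\<^esub> Z \<otimes>\<^bsub>H\<^esub> h r"
    unfolding two_sided_arc_def by blast
  have l: "l \<in> carrier G" and r: "r \<in> carrier G"
    using assms(1,2) \<open>l \<in> L\<close> \<open>r \<in> R\<close> by auto
  define y where "y = l \<otimes>\<^bsub>G\<^esub> x \<otimes>\<^bsub>G\<^esub> inv\<^bsub>G\<^esub> r"
  have "h y = h l \<otimes>\<^bsub>H\<^esub> h x \<otimes>\<^bsub>H\<^esub> inv\<^bsub>H\<^esub> h r"
    using l r assms(3) by (simp add: y_def)
  also have "\<dots> = Z"
    unfolding hx using l r Z
    by (simp add: H.m_assoc, simp add: H.m_assoc[symmetric])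
  moreover have "x = inv\<^bsub>G\<^esub> l \<otimes>\<^bsub>G\<^esub> y \<otimes>\<^bsub>G\<^esub> r"
    using l r assms(3) by (simp add: y_def G.m_assoc G.inv_solve_left)
  moreover have "y \<in> carrier G"
    using l r assms(3) by (simp add: y_def)
  ultimately show ?thesis
    using assms(3) \<open>l \<in> L\<close> \<open>r \<in> R\<close> unfolding two_sided_arc_def by blast
qed

lemma weakly_connected_to_lift:
  assumes "L \<subseteq> carrier G" "R \<subseteq> carrier G" "x \<in> carrier G"
    and "weakly_connected_to H (h ` L) (h ` R) (h x) B"
  shows "\<exists>y \<in> carrier G. h y = B \<and> weakly_connected_to G L R x y"
  using assms(4)[unfolded weakly_connected_to_eq_symclp]
proof (induction rule: rtranclp_induct)
  case base
  show ?case
    using assms(3) weakly_connected_to_refl by fast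
next
  case (step B Z)
  from step.IH obtain y where y: "y \<in> carrier G" "h y = B" "weakly_connected_to G L R x y"
    by blast
  from step.hyps(2) have "symclp (two_sided_arc H (h ` L) (h ` R)) (h y) Z"
    using y(2) by simp
  then obtain z where z: "h z = Z" "symclp (two_sided_arc G L R) y z"
  proof cases
    case base
    from two_sided_arc_lift[OF assms(1,2) y(1) base] show ?thesis
      using that symclpI1 by metis
  next
    case sym
    from two_sided_arc_lift_converse[OF assms(1,2) y(1) sym] show ?thesis
      using that symclpI2 by metis
  qed
  moreover have "z \<in> carrier G"
    using z(2) by cases (simp_all add: two_sided_arc_def)
  moreover have "weakly_connected_to G L R x z"
    using y(3) weakly_connected_to_if_symclp_arc[OF z(2)] by (rule weakly_connected_to_trans)
  ultimately show ?case
    by blast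
qed

theorem weakly_connected_2S_iff_image_and_kernel:
  assumes surj: "h ` carrier G = carrier H"
    and "L \<subseteq> carrier G" "R \<subseteq> carrier G"
  shows "weakly_connected_2S G L R \<longleftrightarrow>
           weakly_connected_2S H (h ` L) (h ` R) \<and>
           (\<forall>x \<in> kernel G H h. \<forall>y \<in> kernel G H h. weakly_connected_to G L R x y)"
proof (intro iffI conjI)
  assume connected: "weakly_connected_2S G L R"
  then show "weakly_connected_2S H (h ` L) (h ` R)"
    using weakly_connected_to_image[OF assms(2,3)]
    unfolding weakly_connected_2S_def surj[symmetric] by blast
  show "\<forall>x \<in> kernel G H h. \<forall>y \<in> kernel G H h. weakly_connected_to G L R x y"
    using connected unfolding weakly_connected_2S_def kernel_def by blast
next
  assume "weakly_connected_2S H (h ` L) (h ` R) \<and>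
           (\<forall>x \<in> kernel G H h. \<forall>y \<in> kernel G H h. weakly_connected_to G L R x y)"
  then have image: "weakly_connected_2S H (h ` L) (h ` R)"
    and kernel: "\<forall>x \<in> kernel G H h. \<forall>y \<in> kernel G H h. weakly_connected_to G L R x y"
    by auto
  have to_kernel: "\<exists>k \<in> kernel G H h. weakly_connected_to G L R g k" if "g \<in> carrier G" for g
  proof -
    have "weakly_connected_to H (h ` L) (h ` R) (h g) \<one>\<^bsub>H\<^esub>"
      using image that unfolding weakly_connected_2S_def by simp
    then show ?thesis
      using weakly_connected_to_lift[OF assms(2,3) that] unfolding kernel_def by blast
  qed
  show "weakly_connected_2S G L R"
    unfolding weakly_connected_2S_def
  proof (intro ballI)
    fix x y assume "x \<in> carrier G" "y \<in> carrier G"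
    with to_kernel obtain kx ky where "kx \<in> kernel G H h" "ky \<in> kernel G H h"
      and "weakly_connected_to G L R x kx" "weakly_connected_to G L R y ky"
      by meson
    then show "weakly_connected_to G L R x y"
      using kernel weakly_connected_to_trans weakly_connected_to_sym by metis
  qed
qed

end

lemma (in normal) group_hom_rcoset_Mod: "group_hom G (G Mod H) (\<lambda>a. H #> a)"
  by (simp add: group_hom_def group_hom_axioms_def factorgroup_is_group r_coset_hom_Mod is_group)

lemma (in normal) kernel_rcoset_Mod: "kernel G (G Mod H) (\<lambda>a. H #> a) = H"
  using rcos_const[OF is_group] rcos_self[OF _ subgroup_axioms]
  by (auto simp: kernel_def)

theorem mainTheorem19:
  fixes G :: "('a, 'b) monoid_scheme" and N L R :: "'a set"
  assumes "group G" and "N \<lhd> G"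
    and "L \<subseteq> carrier G" and "L \<noteq> {}"
    and "R \<subseteq> carrier G" and "R \<noteq> {}"
  shows "weakly_connected_2S G L R \<longleftrightarrow>
           (weakly_connected_2S (G Mod N) ((\<lambda>g. N #>\<^bsub>G\<^esub> g) ` L) ((\<lambda>g. N #>\<^bsub>G\<^esub> g) ` R)
            \<and> (\<forall>x\<in>N. \<forall>y\<in>N. weakly_connected_to G L R x y))"
proof -
  interpret normal N G by (rule assms(2))
  show ?thesis
    using group_hom.weakly_connected_2S_iff_image_and_kernel[OF group_hom_rcoset_Mod
        carrier_FactGroup[symmetric] assms(3,5)]
    by (simp add: kernel_rcoset_Mod)
qed

end
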